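(* Let $G$ be a compact Hausdorff topological group and $p\colon E\to B$ a $G$-map of Hausdorff $G$-spaces. If $p(E^H)=B^H$ for all closed subgroups $H$ of $G$, then $\mathrm{secat}_G(p)\le\mathrm{cat}_G(B)$.
   Context: $X^H=\{x: hx=x\ \forall h\in H\}$. A $G$-homotopy is an equivariant homotopy with $G$ acting trivially on $I$. An invariant set $U\subseteq B$ is $G$-categorical if its inclusion is $G$-homotopic to a map with values in a single orbit; $\mathrm{cat}_G(B)$ is the least $k$ such that $B$ is covered by $k$ open $G$-categorical sets. $\mathrm{secat}_G(p)$ is the least $k$ such that $B$ is covered by $k$ invariant open sets $U_i$ each admitting a $G$-map $s\colon U_i\to E$ with $ps$ $G$-homotopic to the inclusion ($\infty$ if none). *)

theory Defs
  imports "HOL-Analysis.Analysis" "HOL-Algebra.Group" "HOL-Library.Extended_Nat"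
begin

definition topological_group :: "('g, 'm) monoid_scheme \<Rightarrow> 'g topology \<Rightarrow> bool" where
  "topological_group G T \<longleftrightarrow> group G \<and> topspace T = carrier G \<and>
     continuous_map (prod_topology T T) T (\<lambda>(x, y). x \<otimes>\<^bsub>G\<^esub> y) \<and>
     continuous_map T T (\<lambda>x. inv\<^bsub>G\<^esub> x)"

definition G_space :: "('g, 'm) monoid_scheme \<Rightarrow> 'g topology \<Rightarrow> 'x topology \<Rightarrow> ('g \<Rightarrow> 'x \<Rightarrow> 'x) \<Rightarrow> bool" where
  "G_space G T X a \<longleftrightarrow>
     continuous_map (prod_topology T X) X (\<lambda>(g, x). a g x) \<and>
     (\<forall>x \<in> topspace X. a \<one>\<^bsub>G\<^esub> x = x) \<and>
     (\<forall>g \<in> carrier G. \<forall>h \<in> carrier G. \<forall>x \<in> topspace X. a (g \<otimes>\<^bsub>G\<^esub> h) x = a g (a h x))"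

definition equivariant_on :: "('g, 'm) monoid_scheme \<Rightarrow> 'x set \<Rightarrow> ('g \<Rightarrow> 'x \<Rightarrow> 'x) \<Rightarrow> ('g \<Rightarrow> 'y \<Rightarrow> 'y) \<Rightarrow> ('x \<Rightarrow> 'y) \<Rightarrow> bool" where
  "equivariant_on G U a b f \<longleftrightarrow> (\<forall>g \<in> carrier G. \<forall>x \<in> U. f (a g x) = b g (f x))"

definition G_map :: "('g, 'm) monoid_scheme \<Rightarrow> 'x topology \<Rightarrow> ('g \<Rightarrow> 'x \<Rightarrow> 'x) \<Rightarrow> 'y topology \<Rightarrow> ('g \<Rightarrow> 'y \<Rightarrow> 'y) \<Rightarrow> ('x \<Rightarrow> 'y) \<Rightarrow> bool" where
  "G_map G X a Y b f \<longleftrightarrow> continuous_map X Y f \<and> equivariant_on G (topspace X) a b f"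

definition invariant :: "('g, 'm) monoid_scheme \<Rightarrow> ('g \<Rightarrow> 'x \<Rightarrow> 'x) \<Rightarrow> 'x set \<Rightarrow> bool" where
  "invariant G a U \<longleftrightarrow> (\<forall>g \<in> carrier G. \<forall>x \<in> U. a g x \<in> U)"

text \<open>G-homotopy of maps from the invariant subspace U of X into Y: a homotopy all of whose
  stages are equivariant (G acts trivially on the interval).\<close>
definition G_homotopic :: "('g, 'm) monoid_scheme \<Rightarrow> 'x topology \<Rightarrow> ('g \<Rightarrow> 'x \<Rightarrow> 'x) \<Rightarrow> 'x set \<Rightarrow>
    'y topology \<Rightarrow> ('g \<Rightarrow> 'y \<Rightarrow> 'y) \<Rightarrow> ('x \<Rightarrow> 'y) \<Rightarrow> ('x \<Rightarrow> 'y) \<Rightarrow> bool" where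
  "G_homotopic G X a U Y b f0 f1 \<longleftrightarrow>
     homotopic_with (\<lambda>k. equivariant_on G (topspace (subtopology X U)) a b k) (subtopology X U) Y f0 f1"

definition orbit_of :: "('g, 'm) monoid_scheme \<Rightarrow> ('g \<Rightarrow> 'x \<Rightarrow> 'x) \<Rightarrow> 'x \<Rightarrow> 'x set" where
  "orbit_of G a y = {a g y | g. g \<in> carrier G}"

definition fixed_set :: "'x topology \<Rightarrow> ('g \<Rightarrow> 'x \<Rightarrow> 'x) \<Rightarrow> 'g set \<Rightarrow> 'x set" where
  "fixed_set X a H = {x \<in> topspace X. \<forall>h \<in> H. a h x = x}"

definition G_categorical :: "('g, 'm) monoid_scheme \<Rightarrow> 'b topology \<Rightarrow> ('g \<Rightarrow> 'b \<Rightarrow> 'b) \<Rightarrow> 'b set \<Rightarrow> bool" where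
  "G_categorical G B b U \<longleftrightarrow> U \<subseteq> topspace B \<and> invariant G b U \<and>
     (\<exists>c y. y \<in> topspace B \<and> c ` U \<subseteq> orbit_of G b y \<and> G_homotopic G B b U B b id c)"

text \<open>Equivariant LS category (value \<infinity> if no finite cover exists).\<close>
definition cat_G :: "('g, 'm) monoid_scheme \<Rightarrow> 'b topology \<Rightarrow> ('g \<Rightarrow> 'b \<Rightarrow> 'b) \<Rightarrow> enat" where
  "cat_G G B b = Inf {enat k | k. \<exists>Us :: nat \<Rightarrow> 'b set.
      (\<forall>i < k. openin B (Us i) \<and> G_categorical G B b (Us i)) \<and> (\<Union>i<k. Us i) = topspace B}"

definition secat_G :: "('g, 'm) monoid_scheme \<Rightarrow> 'e topology \<Rightarrow> ('g \<Rightarrow> 'e \<Rightarrow> 'e) \<Rightarrow>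
    'b topology \<Rightarrow> ('g \<Rightarrow> 'b \<Rightarrow> 'b) \<Rightarrow> ('e \<Rightarrow> 'b) \<Rightarrow> enat" where
  "secat_G G E e B b p = Inf {enat k | k. \<exists>Us :: nat \<Rightarrow> 'b set.
      (\<forall>i < k. openin B (Us i) \<and> invariant G b (Us i) \<and>
         (\<exists>s. G_map G (subtopology B (Us i)) b E e s \<and> G_homotopic G B b (Us i) B b (p \<circ> s) id)) \<and>
      (\<Union>i<k. Us i) = topspace B}"

end

theory Submission
  imports Defs
begin

text \<open>Let \<open>U\<close> be \<open>G\<close>-categorical, deformed onto the orbit of a point \<open>y\<close> by \<open>c\<close>. The stabilizer
  \<open>G\<^sub>y\<close> is a closed subgroup and \<open>y \<in> B\<^bsup>G\<^sub>y\<^esup>\<close>, so some \<open>x \<in> E\<^bsup>G\<^sub>y\<^esup>\<close> has \<open>p x = y\<close>. Then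
  \<open>g y \<mapsto> g x\<close> is a well-defined equivariant section of \<open>p\<close> over the orbit, continuous because
  the orbit map of a compact group into a Hausdorff space is closed. Composing it with \<open>c\<close>
  gives a section over \<open>U\<close> whose image under \<open>p\<close> is \<open>c\<close>, hence \<open>G\<close>-homotopic to the inclusion.\<close>

definition stabilizer :: "('g, 'm) monoid_scheme \<Rightarrow> ('g \<Rightarrow> 'x \<Rightarrow> 'x) \<Rightarrow> 'x \<Rightarrow> 'g set" where
  "stabilizer G a x = {g \<in> carrier G. a g x = x}"

text \<open>This models \<open>g y \<mapsto> g x\<close> on the orbit of \<open>y\<close>; the choice of \<open>g\<close> is irrelevant once
  \<open>G\<^sub>y \<subseteq> G\<^sub>x\<close>.\<close>

definition orbit_section ::
    "('g, 'm) monoid_scheme \<Rightarrow> ('g \<Rightarrow> 'b \<Rightarrow> 'b) \<Rightarrow> 'b \<Rightarrow> ('g \<Rightarrow> 'e \<Rightarrow> 'e) \<Rightarrow> 'e \<Rightarrow> 'b \<Rightarrow> 'e" where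
  "orbit_section G b y e x z = e (SOME g. g \<in> carrier G \<and> b g y = z) x"

lemma G_space_one:
  "G_space G T X a \<Longrightarrow> x \<in> topspace X \<Longrightarrow> a \<one>\<^bsub>G\<^esub> x = x"
  by (simp add: G_space_def)

lemma G_space_mult:
  "G_space G T X a \<Longrightarrow> g \<in> carrier G \<Longrightarrow> h \<in> carrier G \<Longrightarrow> x \<in> topspace X \<Longrightarrow>
    a (g \<otimes>\<^bsub>G\<^esub> h) x = a g (a h x)"
  by (simp add: G_space_def)

lemma continuous_map_orbit:
  assumes "G_space G T X a" and "x \<in> topspace X"
  shows "continuous_map T X (\<lambda>g. a g x)"
proof -
  have "continuous_map T (prod_topology T X) (\<lambda>g. (g, x))"
    using assms(2) by (simp add: continuous_map_paired)
  from continuous_map_compose[OF this] assms(1) show ?thesis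
    by (fastforce simp: G_space_def o_def)
qed

lemma orbit_of_subset_topspace:
  assumes "topological_group G T" "G_space G T X a" "x \<in> topspace X"
  shows "orbit_of G a x \<subseteq> topspace X"
  using continuous_map_image_subset_topspace[OF continuous_map_orbit[OF assms(2,3)]] assms(1)
  by (auto simp: orbit_of_def topological_group_def)

lemma act_eq_iff_stabilizer:
  assumes "group G" "G_space G T X a" "x \<in> topspace X" "g \<in> carrier G" "h \<in> carrier G"
  shows "a g x = a h x \<longleftrightarrow> inv\<^bsub>G\<^esub> h \<otimes>\<^bsub>G\<^esub> g \<in> stabilizer G a x"
proof -
  interpret G: group G by fact
  note mult = G_space_mult[OF assms(2)]
  have "a (inv\<^bsub>G\<^esub> h \<otimes>\<^bsub>G\<^esub> g) x = a (inv\<^bsub>G\<^esub> h) (a g x)"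
    using assms mult by simp
  moreover have "a (inv\<^bsub>G\<^esub> h) (a h x) = x"
    using assms mult[symmetric] G_space_one[OF assms(2,3)] by simp
  moreover have "a h (a (inv\<^bsub>G\<^esub> h \<otimes>\<^bsub>G\<^esub> g) x) = a g x"
    using assms mult[symmetric] by (simp add: G.m_assoc[symmetric])
  ultimately show ?thesis
    using assms by (auto simp: stabilizer_def)
qed

lemma subgroup_stabilizer:
  assumes "group G" "G_space G T X a" "x \<in> topspace X"
  shows "subgroup (stabilizer G a x) G"
proof -
  interpret G: group G by fact
  show ?thesis
  proof
    fix g assume "g \<in> stabilizer G a x"
    then have "a \<one>\<^bsub>G\<^esub> x = a g x" and g: "g \<in> carrier G"
      using G_space_one[OF assms(2,3)] by (auto simp: stabilizer_def)
    then show "inv\<^bsub>G\<^esub> g \<in> stabilizer G a x"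
      using act_eq_iff_stabilizer[OF assms, of "\<one>\<^bsub>G\<^esub>" g] by simp
  qed (use assms G_space_one[OF assms(2,3)] G_space_mult[OF assms(2)] in \<open>auto simp: stabilizer_def\<close>)
qed

lemma closedin_stabilizer:
  assumes "topological_group G T" "G_space G T X a" "Hausdorff_space X" "x \<in> topspace X"
  shows "closedin T (stabilizer G a x)"
  using closedin_continuous_map_preimage[OF continuous_map_orbit[OF assms(2,4)]
      closedin_Hausdorff_singleton[OF assms(3,4)]] assms(1)
  by (simp add: stabilizer_def topological_group_def)

lemma orbit_section_apply:
  assumes "group G" "G_space G T B b" "G_space G T E e" "y \<in> topspace B" "x \<in> topspace E"
    and "stabilizer G b y \<subseteq> stabilizer G e x" and "g \<in> carrier G"
  shows "orbit_section G b y e x (b g y) = e g x"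
proof -
  obtain h where h: "h \<in> carrier G" "b h y = b g y" and sec: "orbit_section G b y e x (b g y) = e h x"
    unfolding orbit_section_def by (metis (mono_tags, lifting) assms(7) someI_ex)
  then have "inv\<^bsub>G\<^esub> g \<otimes>\<^bsub>G\<^esub> h \<in> stabilizer G e x"
    using assms act_eq_iff_stabilizer[of G T B b y h g] by auto
  then show ?thesis
    using sec act_eq_iff_stabilizer[OF assms(1,3,5) h(1) assms(7)] by simp
qed

text \<open>The preimage of a closed set \<open>C\<close> is the image of the closed, hence compact, set
  \<open>{g. g x \<in> C}\<close> under the orbit map of \<open>y\<close>; so it is compact, hence closed in \<open>B\<close>.\<close>

lemma continuous_map_orbit_section:
  assumes "topological_group G T" "compact_space T" "G_space G T B b" "Hausdorff_space B"
    and "G_space G T E e" "y \<in> topspace B" "x \<in> topspace E"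
    and "stabilizer G b y \<subseteq> stabilizer G e x"
  shows "continuous_map (subtopology B (orbit_of G b y)) E (orbit_section G b y e x)"
proof -
  have grp: "group G" and tsT: "topspace T = carrier G"
    using assms(1) by (auto simp: topological_group_def)
  have sec: "orbit_section G b y e x (b g y) = e g x" if "g \<in> carrier G" for g
    using orbit_section_apply[OF grp assms(3,5,6,7,8) that] .
  have ec: "continuous_map T E (\<lambda>g. e g x)"
    by (rule continuous_map_orbit[OF assms(5,7)])
  have bc: "continuous_map T B (\<lambda>g. b g y)"
    by (rule continuous_map_orbit[OF assms(3,6)])
  have orbB: "orbit_of G b y \<subseteq> topspace B"
    by (rule orbit_of_subset_topspace[OF assms(1,3,6)])
  show ?thesis
  proof (rule continuous_map_closedin[THEN iffD2], intro conjI allI impI)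
    show "orbit_section G b y e x \<in> topspace (subtopology B (orbit_of G b y)) \<rightarrow> topspace E"
      using sec continuous_map_image_subset_topspace[OF ec] tsT by (auto simp: orbit_of_def)
  next
    fix C assume C: "closedin E C"
    let ?K = "(\<lambda>g. b g y) ` {g \<in> topspace T. e g x \<in> C}"
    have "compactin B ?K"
      using image_compactin closedin_compact_space[OF assms(2)]
        closedin_continuous_map_preimage[OF ec C] bc by blast
    then have "closedin B ?K"
      using compactin_imp_closedin[OF assms(4)] by blast
    moreover have "{z \<in> topspace (subtopology B (orbit_of G b y)). orbit_section G b y e x z \<in> C} = ?K"
      using orbB sec tsT by (auto simp: orbit_of_def)
    moreover have "?K \<subseteq> orbit_of G b y"
      using tsT by (auto simp: orbit_of_def)
    ultimately show "closedin (subtopology B (orbit_of G b y))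
        {z \<in> topspace (subtopology B (orbit_of G b y)). orbit_section G b y e x z \<in> C}"
      by (simp add: closedin_subset_topspace)
  qed
qed

lemma orbit_section_equivariant:
  assumes "group G" "G_space G T B b" "G_space G T E e" "y \<in> topspace B" "x \<in> topspace E"
    and "stabilizer G b y \<subseteq> stabilizer G e x"
  shows "equivariant_on G (orbit_of G b y) b e (orbit_section G b y e x)"
  unfolding equivariant_on_def orbit_of_def
proof (clarify)
  fix g h assume g: "g \<in> carrier G" and h: "h \<in> carrier G"
  have gh: "g \<otimes>\<^bsub>G\<^esub> h \<in> carrier G"
    using assms(1) g h by (simp add: group.is_monoid monoid.m_closed)
  note sec = orbit_section_apply[OF assms]
  have "orbit_section G b y e x (b g (b h y)) = e (g \<otimes>\<^bsub>G\<^esub> h) x"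
    using sec[OF gh] G_space_mult[OF assms(2) g h assms(4)] by simp
  also have "\<dots> = e g (orbit_section G b y e x (b h y))"
    using sec[OF h] G_space_mult[OF assms(3) g h assms(5)] by simp
  finally show "orbit_section G b y e x (b g (b h y)) = e g (orbit_section G b y e x (b h y))" .
qed

lemma orbit_section_is_section:
  assumes "group G" "G_space G T B b" "G_space G T E e" "y \<in> topspace B" "x \<in> topspace E"
    and "stabilizer G b y \<subseteq> stabilizer G e x"
    and "G_map G E e B b p" "p x = y" "z \<in> orbit_of G b y"
  shows "p (orbit_section G b y e x z) = z"
proof -
  obtain g where g: "g \<in> carrier G" and z: "z = b g y"
    using assms(9) by (auto simp: orbit_of_def)
  then show ?thesis
    using orbit_section_apply[OF assms(1-6) g] assms(5,7,8)
    by (simp add: G_map_def equivariant_on_def)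
qed

lemma equivariant_on_compose:
  assumes "equivariant_on G U a b f" "f ` U \<subseteq> V" "equivariant_on G V b c k"
  shows "equivariant_on G U a c (k \<circ> f)"
  using assms by (auto simp: equivariant_on_def image_subset_iff)

lemma G_homotopic_eq_on:
  assumes "U \<subseteq> topspace X" "continuous_map (subtopology X U) Y f"
    and "equivariant_on G U a b f" "\<And>u. u \<in> U \<Longrightarrow> f u = k u" "G_homotopic G X a U Y b k h"
  shows "G_homotopic G X a U Y b f h"
proof -
  have tsU: "topspace (subtopology X U) = U"
    using assms(1) by auto
  then have kh: "homotopic_with (\<lambda>k. equivariant_on G U a b k) (subtopology X U) Y k h"
    using assms(5) by (simp add: G_homotopic_def)
  have "homotopic_with (\<lambda>k. equivariant_on G U a b k) (subtopology X U) Y f k"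
    using homotopic_with_imp_property[OF kh] assms(2-4) tsU
    by (intro homotopic_with_equal) auto
  then show ?thesis
    using homotopic_with_trans[OF _ kh] tsU by (simp add: G_homotopic_def)
qed

lemma G_categorical_imp_G_section:
  assumes "topological_group G T" "compact_space T"
    and "G_space G T E e" "G_space G T B b" "Hausdorff_space B" "G_map G E e B b p"
    and "\<And>H. subgroup H G \<Longrightarrow> closedin T H \<Longrightarrow> p ` fixed_set E e H = fixed_set B b H"
    and "G_categorical G B b U"
  shows "\<exists>s. G_map G (subtopology B U) b E e s \<and> G_homotopic G B b U B b (p \<circ> s) id"
proof -
  have grp: "group G"
    using assms(1) by (simp add: topological_group_def)
  obtain c y where U: "U \<subseteq> topspace B" and y: "y \<in> topspace B"
    and cU: "c ` U \<subseteq> orbit_of G b y" and hom: "G_homotopic G B b U B b id c"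
    using assms(8) by (auto simp: G_categorical_def)
  have tsU: "topspace (subtopology B U) = U"
    using U by auto
  have hom': "homotopic_with (\<lambda>k. equivariant_on G U b b k) (subtopology B U) B c id"
    using hom tsU by (simp add: G_homotopic_def homotopic_with_sym)
  have "y \<in> fixed_set B b (stabilizer G b y)"
    using y by (simp add: fixed_set_def stabilizer_def)
  then obtain x where x: "x \<in> fixed_set E e (stabilizer G b y)" and pxy: "p x = y"
    using assms(7) subgroup_stabilizer[OF grp assms(4) y] closedin_stabilizer[OF assms(1,4,5) y]
    by (metis imageE)
  have xE: "x \<in> topspace E" and stab: "stabilizer G b y \<subseteq> stabilizer G e x"
    using x by (auto simp: fixed_set_def stabilizer_def)
  define s where "s = orbit_section G b y e x \<circ> c"
  have "continuous_map (subtopology B U) (subtopology B (orbit_of G b y)) c"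
    using homotopic_with_imp_continuous_maps[OF hom'] cU tsU
    by (simp add: continuous_map_in_subtopology image_subset_iff_funcset)
  then have sc: "continuous_map (subtopology B U) E s"
    unfolding s_def
    using continuous_map_orbit_section[OF assms(1,2,4,5,3) y xE stab] continuous_map_compose by blast
  have seq: "equivariant_on G U b e s"
    unfolding s_def using conjunct1[OF homotopic_with_imp_property[OF hom']] cU
      orbit_section_equivariant[OF grp assms(4,3) y xE stab]
    by (rule equivariant_on_compose)
  have "G_homotopic G B b U B b (p \<circ> s) id"
  proof (rule G_homotopic_eq_on[OF U])
    show "continuous_map (subtopology B U) B (p \<circ> s)"
      using sc assms(6) by (auto simp: G_map_def intro: continuous_map_compose)
    show "equivariant_on G U b b (p \<circ> s)"
      using seq assms(6) continuous_map_image_subset_topspace[OF sc] tsU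
      by (intro equivariant_on_compose) (auto simp: G_map_def)
    show "(p \<circ> s) u = c u" if "u \<in> U" for u
      using orbit_section_is_section[OF grp assms(4,3) y xE stab assms(6) pxy] cU that
      by (auto simp: s_def)
    show "G_homotopic G B b U B b c id"
      using hom' tsU by (simp add: G_homotopic_def)
  qed
  moreover have "G_map G (subtopology B U) b E e s"
    using sc seq tsU by (simp add: G_map_def)
  ultimately show ?thesis
    by blast
qed

lemma secat_G_le_cat_G:
  fixes B :: "'b topology"
  assumes "\<And>U. openin B U \<Longrightarrow> G_categorical G B b U \<Longrightarrow>
      \<exists>s. G_map G (subtopology B U) b E e s \<and> G_homotopic G B b U B b (p \<circ> s) id"
  shows "secat_G G E e B b p \<le> cat_G G B b"
  unfolding secat_G_def cat_G_def
proof (rule Inf_superset_mono, clarify)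
  fix k :: nat and Us :: "nat \<Rightarrow> 'b set"
  assume cover: "\<forall>i<k. openin B (Us i) \<and> G_categorical G B b (Us i)" "(\<Union>i<k. Us i) = topspace B"
  then have "\<forall>i<k. openin B (Us i) \<and> invariant G b (Us i) \<and>
      (\<exists>s. G_map G (subtopology B (Us i)) b E e s \<and> G_homotopic G B b (Us i) B b (p \<circ> s) id)"
    using assms by (auto simp: G_categorical_def)
  with cover(2) show "\<exists>k'. enat k = enat k' \<and> (\<exists>Us. (\<forall>i<k'. openin B (Us i) \<and> invariant G b (Us i) \<and>
      (\<exists>s. G_map G (subtopology B (Us i)) b E e s \<and> G_homotopic G B b (Us i) B b (p \<circ> s) id)) \<and>
      (\<Union>i<k'. Us i) = topspace B)"
    by blast
qed

theorem proposition4p5: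
  fixes G :: "'g monoid" and T :: "'g topology"
    and E :: "'e topology" and e :: "'g \<Rightarrow> 'e \<Rightarrow> 'e"
    and B :: "'b topology" and b :: "'g \<Rightarrow> 'b \<Rightarrow> 'b"
    and p :: "'e \<Rightarrow> 'b"
  assumes "topological_group G T" and "compact_space T" and "Hausdorff_space T"
    and "G_space G T E e" and "Hausdorff_space E"
    and "G_space G T B b" and "Hausdorff_space B"
    and "G_map G E e B b p"
    and "\<And>H. subgroup H G \<Longrightarrow> closedin T H \<Longrightarrow> p ` fixed_set E e H = fixed_set B b H"
  shows "secat_G G E e B b p \<le> cat_G G B b"
  using G_categorical_imp_G_section[OF assms(1,2,4,6,7,8,9)] by (rule secat_G_le_cat_G)

end
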